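(* Let $N\ge1$, $0=\tau_0<\cdots<\tau_N=1$, $\Delta_i=\tau_{i+1}-\tau_i$, $D_2=\sum_i\Delta_i^2$, $0<\omega<1/N$ and $\mathcal W_\omega=\{w\in\mathbb R^N:w_i\ge\omega\ \forall i,\ \sum_iw_i=1\}$. Fix $\varepsilon_a>0$, nonnegative weights $K_\sigma(i,\ell)$ with $\sum_\ell K_\sigma(i,\ell)=1$, numbers $\widehat{\mathcal A}_i\ge0$ and $\mathcal A_i\ge0$. Define $\widehat b_i=\sum_\ell K_\sigma(i,\ell)\sqrt{\widehat{\mathcal A}_\ell+\varepsilon_a}$, $\widehat\phi_i=\widehat b_i^2$, $\widehat w_i=\Delta_i\widehat b_i/\sum_\ell\Delta_\ell\widehat b_\ell$, $b_i^\star=\sum_\ell K_\sigma(i,\ell)\sqrt{\mathcal A_\ell+\varepsilon_a}$, $\phi_i^\star=(b_i^\star)^2$, and $\mathcal J_{\sigma,\varepsilon_a}(w)=\sum_i\phi_i^\star\Delta_i^2/w_i$. Assume $\widehat w\in\mathcal W_\omega$ and let $w^\star_{\sigma,\varepsilon_a}=\arg\min_{w\in\mathcal W_\omega}\mathcal J_{\sigma,\varepsilon_a}(w)$. If $\zeta\ge0$ and $\max_i|\widehat\phi_i-\phi_i^\star|\le\zeta$, then $$\mathcal J_{\sigma,\varepsilon_a}(\widehat w)\le\mathcal J_{\sigma,\varepsilon_a}(w^\star_{\sigma,\varepsilon_a})+\frac{2D_2}{\omega}\zeta.$$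
   Context: In the paper, $\widehat{\mathcal A}_i$ are empirical averages of interval-wise local-error coefficients over calibration trajectories and $\mathcal A_i$ their population means. *)

theory Defs
  imports "HOL-Analysis.Analysis"
begin

text \<open>Vectors in R^N are represented as functions nat => real, indices 0..N-1.\<close>

definition simplex_floor :: "nat \<Rightarrow> real \<Rightarrow> (nat \<Rightarrow> real) set" where
  "simplex_floor N \<omega> = {w. (\<forall>i<N. w i \<ge> \<omega>) \<and> (\<Sum>i<N. w i) = 1}"

definition Jobj :: "nat \<Rightarrow> (nat \<Rightarrow> real) \<Rightarrow> (nat \<Rightarrow> real) \<Rightarrow> (nat \<Rightarrow> real) \<Rightarrow> real" where
  "Jobj N \<phi> \<Delta> w = (\<Sum>i<N. \<phi> i * (\<Delta> i)\<^sup>2 / w i)"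

end

theory Submission
  imports Defs
begin

text \<open>With coefficients \<open>\<phi>\<^sub>i = b\<^sub>i\<^sup>2\<close>, the weights \<open>w\<^sub>i \<propto> \<Delta>\<^sub>i b\<^sub>i\<close> minimise
  \<open>\<Sum>\<^sub>i \<phi>\<^sub>i \<Delta>\<^sub>i\<^sup>2 / w\<^sub>i\<close> over all positive normalised weights, the minimum being
  \<open>(\<Sum>\<^sub>i \<Delta>\<^sub>i b\<^sub>i)\<^sup>2\<close> by Cauchy-Schwarz; so the data-driven weights are optimal for
  the empirical coefficients \<open>b\<^sub>i\<^sup>2\<close>. Since every admissible \<open>w\<close> has \<open>w\<^sub>i \<ge> \<omega>\<close>,
  passing between empirical and population coefficients that are \<open>\<zeta>\<close>-close changes
  the objective by at most \<open>\<zeta> D\<^sub>2 / \<omega>\<close>, and this is paid once at each of the two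
  weight vectors.\<close>

lemma simplex_floor_pos:
  assumes "w \<in> simplex_floor N \<omega>" "0 < \<omega>" "i < N"
  shows "0 < w i"
  using assms by (auto simp: simplex_floor_def intro: less_le_trans)

lemma simplex_floor_sum: "w \<in> simplex_floor N \<omega> \<Longrightarrow> (\<Sum>i<N. w i) = 1"
  by (simp add: simplex_floor_def)

lemma Jobj_perturb_abs_le:
  assumes w: "w \<in> simplex_floor N \<omega>" and \<omega>: "0 < \<omega>"
    and close: "\<And>i. i < N \<Longrightarrow> \<bar>\<phi> i - \<psi> i\<bar> \<le> \<zeta>"
  shows "\<bar>Jobj N \<phi> \<Delta> w - Jobj N \<psi> \<Delta> w\<bar> \<le> \<zeta> * (\<Sum>i<N. (\<Delta> i)\<^sup>2) / \<omega>"
proof -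
  have term_le: "\<bar>(\<phi> i - \<psi> i) * (\<Delta> i)\<^sup>2 / w i\<bar> \<le> \<zeta> * (\<Delta> i)\<^sup>2 / \<omega>" if i: "i < N" for i
  proof -
    have wi: "\<omega> \<le> w i" using w i by (simp add: simplex_floor_def)
    have "\<bar>(\<phi> i - \<psi> i) * (\<Delta> i)\<^sup>2 / w i\<bar> = \<bar>\<phi> i - \<psi> i\<bar> * (\<Delta> i)\<^sup>2 / w i"
      using wi \<omega> by (simp add: abs_mult)
    also have "\<dots> \<le> \<zeta> * (\<Delta> i)\<^sup>2 / w i"
      using close[OF i] wi \<omega> by (intro divide_right_mono mult_right_mono) auto
    also have "\<dots> \<le> \<zeta> * (\<Delta> i)\<^sup>2 / \<omega>"
      using close[OF i] wi \<omega> by (intro divide_left_mono) auto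
    finally show ?thesis .
  qed
  have "\<bar>Jobj N \<phi> \<Delta> w - Jobj N \<psi> \<Delta> w\<bar> = \<bar>\<Sum>i<N. (\<phi> i - \<psi> i) * (\<Delta> i)\<^sup>2 / w i\<bar>"
    by (simp add: Jobj_def sum_subtractf left_diff_distrib diff_divide_distrib)
  also have "\<dots> \<le> (\<Sum>i<N. \<bar>(\<phi> i - \<psi> i) * (\<Delta> i)\<^sup>2 / w i\<bar>)"
    by (rule sum_abs)
  also have "\<dots> \<le> (\<Sum>i<N. \<zeta> * (\<Delta> i)\<^sup>2 / \<omega>)"
    using term_le by (intro sum_mono) simp
  also have "\<dots> = \<zeta> * (\<Sum>i<N. (\<Delta> i)\<^sup>2) / \<omega>"
    by (simp add: sum_distrib_left sum_divide_distrib)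
  finally show ?thesis .
qed

lemma square_sum_le_sum_square_div_weights:
  fixes a w :: "'a \<Rightarrow> real"
  assumes "finite A" and w_pos: "\<And>i. i \<in> A \<Longrightarrow> 0 < w i" and w_sum: "(\<Sum>i\<in>A. w i) = 1"
  shows "(\<Sum>i\<in>A. a i)\<^sup>2 \<le> (\<Sum>i\<in>A. (a i)\<^sup>2 / w i)"
proof -
  define S where "S = (\<Sum>i\<in>A. a i)"
  \<comment> \<open>Expand \<open>0 \<le> (a\<^sub>i - S w\<^sub>i)\<^sup>2 / w\<^sub>i\<close> and sum over \<open>i\<close>.\<close>
  have term_le: "2 * S * a i - S\<^sup>2 * w i \<le> (a i)\<^sup>2 / w i" if i: "i \<in> A" for i
  proof -
    have "0 \<le> (a i - S * w i)\<^sup>2 / w i" using w_pos[OF i] by simp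
    also have "\<dots> = (a i)\<^sup>2 / w i - (2 * S * a i - S\<^sup>2 * w i)"
      using w_pos[OF i] by (simp add: field_simps power2_eq_square)
    finally show ?thesis by simp
  qed
  have "S\<^sup>2 = (\<Sum>i\<in>A. 2 * S * a i - S\<^sup>2 * w i)"
    using w_sum by (simp add: sum_subtractf sum_distrib_left[symmetric] S_def power2_eq_square)
  also have "\<dots> \<le> (\<Sum>i\<in>A. (a i)\<^sup>2 / w i)"
    using term_le by (rule sum_mono)
  finally show ?thesis by (simp add: S_def)
qed

lemma Jobj_proportional_weights:
  "Jobj N (\<lambda>i. (b i)\<^sup>2) \<Delta> (\<lambda>i. \<Delta> i * b i / (\<Sum>l<N. \<Delta> l * b l)) = (\<Sum>l<N. \<Delta> l * b l)\<^sup>2"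
proof -
  define S where "S = (\<Sum>l<N. \<Delta> l * b l)"
  \<comment> \<open>This also holds when \<open>\<Delta>\<^sub>i b\<^sub>i = 0\<close> or \<open>S = 0\<close>, both sides being \<open>0\<close> since \<open>x / 0 = 0\<close>.\<close>
  have "(b i)\<^sup>2 * (\<Delta> i)\<^sup>2 / (\<Delta> i * b i / S) = \<Delta> i * b i * S" for i
    by (cases "\<Delta> i * b i = 0"; cases "S = 0") (simp_all add: field_simps power2_eq_square)
  then have "Jobj N (\<lambda>i. (b i)\<^sup>2) \<Delta> (\<lambda>i. \<Delta> i * b i / S) = (\<Sum>i<N. \<Delta> i * b i * S)"
    by (simp add: Jobj_def)
  also have "\<dots> = S\<^sup>2"
    by (simp add: S_def sum_distrib_right power2_eq_square)
  finally show ?thesis by (simp add: S_def)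
qed

lemma Jobj_proportional_weights_le:
  assumes v_pos: "\<And>i. i < N \<Longrightarrow> 0 < v i" and v_sum: "(\<Sum>i<N. v i) = 1"
  shows "Jobj N (\<lambda>i. (b i)\<^sup>2) \<Delta> (\<lambda>i. \<Delta> i * b i / (\<Sum>l<N. \<Delta> l * b l))
         \<le> Jobj N (\<lambda>i. (b i)\<^sup>2) \<Delta> v"
proof -
  have "(\<Sum>l<N. \<Delta> l * b l)\<^sup>2 \<le> (\<Sum>i<N. (\<Delta> i * b i)\<^sup>2 / v i)"
    using v_pos v_sum by (intro square_sum_le_sum_square_div_weights) auto
  then show ?thesis
    by (simp add: Jobj_proportional_weights Jobj_def power_mult_distrib mult.commute)
qed

theorem lemma4:
  fixes N :: nat and \<tau> :: "nat \<Rightarrow> real" and \<omega> \<epsilon>a \<zeta> :: real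
    and K :: "nat \<Rightarrow> nat \<Rightarrow> real" and Ahat A :: "nat \<Rightarrow> real"
    and wstar :: "nat \<Rightarrow> real"
  assumes N: "N \<ge> 1"
    and tau0: "\<tau> 0 = 0" and tauN: "\<tau> N = 1"
    and tau_mono: "\<And>i. i < N \<Longrightarrow> \<tau> i < \<tau> (Suc i)"
    and om: "0 < \<omega>" "\<omega> < 1 / real N"
    and eps: "\<epsilon>a > 0"
    and K_nonneg: "\<And>i l. i < N \<Longrightarrow> l < N \<Longrightarrow> K i l \<ge> 0"
    and K_sum: "\<And>i. i < N \<Longrightarrow> (\<Sum>l<N. K i l) = 1"
    and Ahat_nonneg: "\<And>i. i < N \<Longrightarrow> Ahat i \<ge> 0"
    and A_nonneg: "\<And>i. i < N \<Longrightarrow> A i \<ge> 0"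
    and what_in: "(\<lambda>i. (\<tau> (Suc i) - \<tau> i) * (\<Sum>l<N. K i l * sqrt (Ahat l + \<epsilon>a))
                 / (\<Sum>l<N. (\<tau> (Suc l) - \<tau> l) * (\<Sum>m<N. K l m * sqrt (Ahat m + \<epsilon>a))))
                 \<in> simplex_floor N \<omega>"
    and wstar_in: "wstar \<in> simplex_floor N \<omega>"
    and wstar_min: "\<And>w. w \<in> simplex_floor N \<omega> \<Longrightarrow>
         Jobj N (\<lambda>i. (\<Sum>l<N. K i l * sqrt (A l + \<epsilon>a))\<^sup>2) (\<lambda>i. \<tau> (Suc i) - \<tau> i) wstar
         \<le> Jobj N (\<lambda>i. (\<Sum>l<N. K i l * sqrt (A l + \<epsilon>a))\<^sup>2) (\<lambda>i. \<tau> (Suc i) - \<tau> i) w"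
    and zeta: "\<zeta> \<ge> 0"
    and close: "\<And>i. i < N \<Longrightarrow>
         \<bar>(\<Sum>l<N. K i l * sqrt (Ahat l + \<epsilon>a))\<^sup>2 - (\<Sum>l<N. K i l * sqrt (A l + \<epsilon>a))\<^sup>2\<bar> \<le> \<zeta>"
  shows "Jobj N (\<lambda>i. (\<Sum>l<N. K i l * sqrt (A l + \<epsilon>a))\<^sup>2) (\<lambda>i. \<tau> (Suc i) - \<tau> i)
           (\<lambda>i. (\<tau> (Suc i) - \<tau> i) * (\<Sum>l<N. K i l * sqrt (Ahat l + \<epsilon>a))
                 / (\<Sum>l<N. (\<tau> (Suc l) - \<tau> l) * (\<Sum>m<N. K l m * sqrt (Ahat m + \<epsilon>a))))
         \<le> Jobj N (\<lambda>i. (\<Sum>l<N. K i l * sqrt (A l + \<epsilon>a))\<^sup>2) (\<lambda>i. \<tau> (Suc i) - \<tau> i) wstar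
           + 2 * (\<Sum>i<N. (\<tau> (Suc i) - \<tau> i)\<^sup>2) / \<omega> * \<zeta>"
proof -
  define \<Delta> where "\<Delta> i = \<tau> (Suc i) - \<tau> i" for i
  define bhat where "bhat i = (\<Sum>l<N. K i l * sqrt (Ahat l + \<epsilon>a))" for i
  define bstar where "bstar i = (\<Sum>l<N. K i l * sqrt (A l + \<epsilon>a))" for i
  define what where "what = (\<lambda>i. \<Delta> i * bhat i / (\<Sum>l<N. \<Delta> l * bhat l))"
  define J where "J \<phi> w = Jobj N \<phi> \<Delta> w" for \<phi> w
  define err where "err = \<zeta> * (\<Sum>i<N. (\<Delta> i)\<^sup>2) / \<omega>"
  have what_in': "what \<in> simplex_floor N \<omega>"
    using what_in unfolding what_def \<Delta>_def bhat_def .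
  have "\<bar>J (\<lambda>i. (bstar i)\<^sup>2) what - J (\<lambda>i. (bhat i)\<^sup>2) what\<bar> \<le> err"
    unfolding J_def err_def using close
    by (intro Jobj_perturb_abs_le[OF what_in' om(1)]) (simp add: bstar_def bhat_def abs_minus_commute)
  moreover have "J (\<lambda>i. (bhat i)\<^sup>2) what \<le> J (\<lambda>i. (bhat i)\<^sup>2) wstar"
    unfolding J_def what_def
    using simplex_floor_pos[OF wstar_in om(1)] simplex_floor_sum[OF wstar_in]
    by (rule Jobj_proportional_weights_le)
  moreover have "\<bar>J (\<lambda>i. (bhat i)\<^sup>2) wstar - J (\<lambda>i. (bstar i)\<^sup>2) wstar\<bar> \<le> err"
    unfolding J_def err_def using close
    by (intro Jobj_perturb_abs_le[OF wstar_in om(1)]) (simp add: bstar_def bhat_def)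
  moreover have "2 * err = 2 * (\<Sum>i<N. (\<Delta> i)\<^sup>2) / \<omega> * \<zeta>"
    by (simp add: err_def)
  ultimately have "J (\<lambda>i. (bstar i)\<^sup>2) what
      \<le> J (\<lambda>i. (bstar i)\<^sup>2) wstar + 2 * (\<Sum>i<N. (\<Delta> i)\<^sup>2) / \<omega> * \<zeta>"
    by linarith
  then show ?thesis
    unfolding J_def what_def \<Delta>_def bhat_def bstar_def .
qed

end
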